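(* Let $(M,g)$ be a $d$-dimensional Lorentzian spacetime, $d\ge 4$ (no field equations are assumed), equipped with a null basis $(\ell,n,m_{(2)},\dots,m_{(d-1)})$, and consider a linearized perturbation of the metric (and of the basis) about this background. Then the first-order perturbation $\Omega^{(1)}_{ij}$ of the Weyl components $\Omega_{ij}$ is gauge invariant if and only if $\ell$ is a multiple WAND of the background spacetime, or equivalently, if and only if $\Psi^{(0)}_{ijk}=0$ and $\Omega^{(0)}_{ij}=0$.
   Context: The null basis satisfies $\ell\cdot\ell=n\cdot n=\ell\cdot m_{(i)}=n\cdot m_{(i)}=0$, $\ell\cdot n=1$, $m_{(i)}\cdot m_{(j)}=\delta_{ij}$, with indices $i,j,k,\dots$ ranging over $2,\dots,d-1$. With $C_{abcd}$ the Weyl tensor, define the frame components $\Omega_{ij}=C_{abcd}\ell^a m_{(i)}^b\ell^c m_{(j)}^d$ and $\Psi_{ijk}=C_{abcd}\ell^a m_{(i)}^b m_{(j)}^c m_{(k)}^d$. The vector $\ell$ is a multiple WAND (Weyl aligned null direction of multiplicity at least 2) iff $\Omega_{ij}=0$ and $\Psi_{ijk}=0$. For any quantity $X$ write $X=X^{(0)}+X^{(1)}$ with $X^{(0)}$ its background value and $X^{(1)}$ its first-order perturbation. A quantity $X^{(1)}$ is called gauge invariant if it is unchanged to first order both under infinitesimal coordinate transformations (under which a scalar transforms as $X^{(1)}\mapsto X^{(1)}+\xi^\mu\partial_\mu X^{(0)}$) and under infinitesimal changes of the null basis, i.e. infinitesimal Lorentz transformations generated by boosts ($\ell\mapsto\lambda\ell$,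 $n\mapsto\lambda^{-1}n$, $m_{(i)}\mapsto m_{(i)}$), spins ($m_{(i)}\mapsto X_{ij}m_{(j)}$ with $X\in SO(d-2)$), null rotations about $\ell$ ($\ell\mapsto\ell$, $n\mapsto n+z_i m_{(i)}-\tfrac12 z^2\ell$, $m_{(i)}\mapsto m_{(i)}-z_i\ell$) and null rotations about $n$ ($n\mapsto n$, $\ell\mapsto \ell+z_i m_{(i)}-\tfrac12 z^2 n$, $m_{(i)}\mapsto m_{(i)}-z_i n$). *)

theory Defs
  imports "HOL-Analysis.Analysis"
begin

(* Local coordinate model of the spacetime: an open set U of real^'d,
   with d = CARD('d) coordinates x^a, a :: 'd. *)

definition pd :: "'d::finite \<Rightarrow> (real^'d \<Rightarrow> real) \<Rightarrow> real^'d \<Rightarrow> real" where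
  "pd a f p = deriv (\<lambda>t. f (p + t *\<^sub>R axis a 1)) 0"

definition C_inf_on :: "(real^'d::finite) set \<Rightarrow> (real^'d \<Rightarrow> real) \<Rightarrow> bool" where
  "C_inf_on U f \<longleftrightarrow> (\<forall>ds :: 'd list. (foldr pd ds f) differentiable_on U)"

definition gdot :: "(real^'d::finite \<Rightarrow> real^'d^'d) \<Rightarrow> real^'d \<Rightarrow> real^'d \<Rightarrow> real^'d \<Rightarrow> real" where
  "gdot g p u v = (\<Sum>a\<in>UNIV. \<Sum>b\<in>UNIV. g p $ a $ b * u $ a * v $ b)"

definition christoffel :: "(real^'d::finite \<Rightarrow> real^'d^'d) \<Rightarrow> real^'d \<Rightarrow> 'd \<Rightarrow> 'd \<Rightarrow> 'd \<Rightarrow> real" where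
  "christoffel g p a b c = (1/2) * (\<Sum>e\<in>UNIV. matrix_inv (g p) $ a $ e *
      (pd b (\<lambda>q. g q $ e $ c) p + pd c (\<lambda>q. g q $ e $ b) p - pd e (\<lambda>q. g q $ b $ c) p))"

definition riemann_up :: "(real^'d::finite \<Rightarrow> real^'d^'d) \<Rightarrow> real^'d \<Rightarrow> 'd \<Rightarrow> 'd \<Rightarrow> 'd \<Rightarrow> 'd \<Rightarrow> real" where
  "riemann_up g p a b c d =
     pd c (\<lambda>q. christoffel g q a d b) p - pd d (\<lambda>q. christoffel g q a c b) p
     + (\<Sum>e\<in>UNIV. christoffel g p a c e * christoffel g p e d b
                 - christoffel g p a d e * christoffel g p e c b)"

definition riemann :: "(real^'d::finite \<Rightarrow> real^'d^'d) \<Rightarrow> real^'d \<Rightarrow> 'd \<Rightarrow> 'd \<Rightarrow> 'd \<Rightarrow> 'd \<Rightarrow> real" where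
  "riemann g p a b c d = (\<Sum>e\<in>UNIV. g p $ a $ e * riemann_up g p e b c d)"

definition ricci :: "(real^'d::finite \<Rightarrow> real^'d^'d) \<Rightarrow> real^'d \<Rightarrow> 'd \<Rightarrow> 'd \<Rightarrow> real" where
  "ricci g p b d = (\<Sum>a\<in>UNIV. riemann_up g p a b a d)"

definition scalar_curv :: "(real^'d::finite \<Rightarrow> real^'d^'d) \<Rightarrow> real^'d \<Rightarrow> real" where
  "scalar_curv g p = (\<Sum>b\<in>UNIV. \<Sum>d\<in>UNIV. matrix_inv (g p) $ b $ d * ricci g p b d)"

definition weyl_comp :: "(real^'d::finite \<Rightarrow> real^'d^'d) \<Rightarrow> real^'d \<Rightarrow> 'd \<Rightarrow> 'd \<Rightarrow> 'd \<Rightarrow> 'd \<Rightarrow> real" where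
  "weyl_comp g p a b c d =
     (let n = real CARD('d) in
       riemann g p a b c d
       - (1 / (n - 2)) * (g p $ a $ c * ricci g p b d - g p $ a $ d * ricci g p b c
                          - g p $ b $ c * ricci g p a d + g p $ b $ d * ricci g p a c)
       + scalar_curv g p / ((n - 1) * (n - 2)) * (g p $ a $ c * g p $ b $ d - g p $ a $ d * g p $ b $ c))"

definition weyl :: "(real^'d::finite \<Rightarrow> real^'d^'d) \<Rightarrow> real^'d \<Rightarrow> real^'d \<Rightarrow> real^'d \<Rightarrow> real^'d \<Rightarrow> real^'d \<Rightarrow> real" where
  "weyl g p u v w x = (\<Sum>a\<in>UNIV. \<Sum>b\<in>UNIV. \<Sum>c\<in>UNIV. \<Sum>d\<in>UNIV.
       weyl_comp g p a b c d * u $ a * v $ b * w $ c * x $ d)"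

abbreviation frame_idx :: "'d::finite itself \<Rightarrow> nat set" where
  "frame_idx _ \<equiv> {2..<CARD('d)}"

definition null_frame :: "(real^'d::finite \<Rightarrow> real^'d^'d) \<Rightarrow> (real^'d) set \<Rightarrow>
    (real^'d \<Rightarrow> real^'d) \<Rightarrow> (real^'d \<Rightarrow> real^'d) \<Rightarrow> (nat \<Rightarrow> real^'d \<Rightarrow> real^'d) \<Rightarrow> bool" where
  "null_frame g U l nn m \<longleftrightarrow> (\<forall>p\<in>U.
      gdot g p (l p) (l p) = 0 \<and> gdot g p (nn p) (nn p) = 0 \<and> gdot g p (l p) (nn p) = 1 \<and>
      (\<forall>i\<in>frame_idx TYPE('d). gdot g p (l p) (m i p) = 0 \<and> gdot g p (nn p) (m i p) = 0) \<and>
      (\<forall>i\<in>frame_idx TYPE('d). \<forall>j\<in>frame_idx TYPE('d).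
          gdot g p (m i p) (m j p) = (if i = j then 1 else 0)))"

definition Omega0 :: "(real^'d::finite \<Rightarrow> real^'d^'d) \<Rightarrow> (real^'d \<Rightarrow> real^'d) \<Rightarrow>
    (nat \<Rightarrow> real^'d \<Rightarrow> real^'d) \<Rightarrow> real^'d \<Rightarrow> nat \<Rightarrow> nat \<Rightarrow> real" where
  "Omega0 g l m p i j = weyl g p (l p) (m i p) (l p) (m j p)"

definition Psi0 :: "(real^'d::finite \<Rightarrow> real^'d^'d) \<Rightarrow> (real^'d \<Rightarrow> real^'d) \<Rightarrow>
    (nat \<Rightarrow> real^'d \<Rightarrow> real^'d) \<Rightarrow> real^'d \<Rightarrow> nat \<Rightarrow> nat \<Rightarrow> nat \<Rightarrow> real" where
  "Psi0 g l m p i j k = weyl g p (l p) (m i p) (m j p) (m k p)"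

(* l is a multiple WAND at p (as characterized in the paper) *)
definition multiple_WAND :: "(real^'d::finite \<Rightarrow> real^'d^'d) \<Rightarrow> (real^'d \<Rightarrow> real^'d) \<Rightarrow>
    (nat \<Rightarrow> real^'d \<Rightarrow> real^'d) \<Rightarrow> real^'d \<Rightarrow> bool" where
  "multiple_WAND g l m p \<longleftrightarrow>
     (\<forall>i\<in>frame_idx TYPE('d). \<forall>j\<in>frame_idx TYPE('d). Omega0 g l m p i j = 0) \<and>
     (\<forall>i\<in>frame_idx TYPE('d). \<forall>j\<in>frame_idx TYPE('d). \<forall>k\<in>frame_idx TYPE('d). Psi0 g l m p i j k = 0)"

(* First-order change of Omega^(1)_ij under the gauge transformations.
   Coordinate transformation generated by xi:  Omega^(1) -> Omega^(1) + xi^mu d_mu Omega^(0). *)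
definition coord_change where
  "coord_change g l m (xi :: real^'d::finite) p i j =
     (\<Sum>mu\<in>UNIV. xi $ mu * pd mu (\<lambda>q. Omega0 g l m q i j) p)"

(* Infinitesimal Lorentz transformations: derivative at t = 0 of Omega computed in the
   transformed frame (one-parameter family through the identity). *)
definition boost_change where
  "boost_change g (l :: real^'d::finite \<Rightarrow> real^'d) m (eps :: real) p i j =
     deriv (\<lambda>t. weyl g p ((1 + t * eps) *\<^sub>R l p) (m i p) ((1 + t * eps) *\<^sub>R l p) (m j p)) 0"

definition spin_change where
  "spin_change g (l :: real^'d::finite \<Rightarrow> real^'d) m (A :: nat \<Rightarrow> nat \<Rightarrow> real) p i j =
     deriv (\<lambda>t. weyl g p (l p) (m i p + t *\<^sub>R (\<Sum>k\<in>frame_idx TYPE('d). A i k *\<^sub>R m k p))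
                          (l p) (m j p + t *\<^sub>R (\<Sum>k\<in>frame_idx TYPE('d). A j k *\<^sub>R m k p))) 0"

definition nullrot_l_change where
  "nullrot_l_change g (l :: real^'d::finite \<Rightarrow> real^'d) m (z :: nat \<Rightarrow> real) p i j =
     deriv (\<lambda>t. weyl g p (l p) (m i p - (t * z i) *\<^sub>R l p) (l p) (m j p - (t * z j) *\<^sub>R l p)) 0"

definition nullrot_n_change where
  "nullrot_n_change g (l :: real^'d::finite \<Rightarrow> real^'d) nn m (z :: nat \<Rightarrow> real) p i j =
     (let L = (\<lambda>t. l p + t *\<^sub>R (\<Sum>k\<in>frame_idx TYPE('d). z k *\<^sub>R m k p)
                   - (t^2 * (\<Sum>k\<in>frame_idx TYPE('d). (z k)^2) / 2) *\<^sub>R nn p) in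
      deriv (\<lambda>t. weyl g p (L t) (m i p - (t * z i) *\<^sub>R nn p) (L t) (m j p - (t * z j) *\<^sub>R nn p)) 0)"

(* Omega^(1)_ij is gauge invariant: unchanged to first order under all infinitesimal
   coordinate transformations and all infinitesimal boosts, spins (so(d-2) generators,
   i.e. antisymmetric A) and null rotations about l and about n. *)
definition Omega1_gauge_invariant where
  "Omega1_gauge_invariant g (U :: (real^'d::finite) set) l nn m \<longleftrightarrow>
     (\<forall>p\<in>U. \<forall>i\<in>frame_idx TYPE('d). \<forall>j\<in>frame_idx TYPE('d).
        (\<forall>xi. coord_change g l m xi p i j = 0) \<and>
        (\<forall>eps. boost_change g l m eps p i j = 0) \<and>
        (\<forall>A. (\<forall>a b. A a b = - A b a) \<longrightarrow> spin_change g l m A p i j = 0) \<and>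
        (\<forall>z. nullrot_l_change g l m z p i j = 0) \<and>
        (\<forall>z. nullrot_n_change g l nn m z p i j = 0))"

end

theory Submission
  imports Defs
begin

(*
  Differentiating Omega_ij = C(l, m_i, l, m_j) along one-parameter frame changes: a boost gives
  2 eps Omega_ij, a spin rotates the indices of Omega, a null rotation about l only produces
  components C(l, l, -, -) and C(-, -, l, l), which vanish by antisymmetry, and a null rotation
  about n with parameters z gives z_k (Psi_jki + Psi_ikj) - z_i Phi_j - z_j Phi_i, where
  Phi_j = C(l, n, l, m_j); a coordinate change adds xi^mu d_mu Omega_ij. Invariance under boosts
  forces Omega = 0; null rotations about n with z = e_k then force Phi = 0 and Psi_jki + Psi_ikj = 0,
  which together with Psi_ijk = - Psi_ikj and the cyclic identity forces Psi = 0. Conversely, if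
  Omega and Psi vanish then so does Phi, by the tracelessness of the Weyl tensor written in the
  null frame, and every change vanishes.

  The Weyl tensor is given by coordinate formulas, so its symmetries are derived from those of the
  Riemann tensor, which rest on the symmetry of mixed second partial derivatives.
*)

section \<open>Partial derivatives\<close>

lemma has_real_derivative_along_line:
  fixes f :: "real^'d::finite \<Rightarrow> real"
  assumes "(f has_derivative F) (at (y + s *\<^sub>R e))"
  shows "((\<lambda>s. f (y + s *\<^sub>R e)) has_real_derivative F e) (at s)"
proof -
  have "((\<lambda>s. y + s *\<^sub>R e) has_derivative (\<lambda>h. h *\<^sub>R e)) (at s)"
    by (auto intro!: derivative_eq_intros)
  then have "((\<lambda>s. f (y + s *\<^sub>R e)) has_derivative (\<lambda>h. F (h *\<^sub>R e))) (at s)"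
    using assms by (rule has_derivative_compose)
  moreover have "(\<lambda>h. F (h *\<^sub>R e)) = (*) (F e)"
    using linear_scale[OF has_derivative_linear[OF assms]] by (auto simp: mult.commute)
  ultimately show ?thesis by (simp add: has_field_derivative_def)
qed

lemma pd_eqI: "((\<lambda>t. f (p + t *\<^sub>R axis a 1)) has_real_derivative D) (at 0) \<Longrightarrow> pd a f p = D"
  by (simp add: pd_def DERIV_imp_deriv)

lemma pd_eq_frechet:
  fixes f :: "real^'d::finite \<Rightarrow> real"
  assumes "(f has_derivative F) (at p)"
  shows "pd a f p = F (axis a 1)"
  by (rule pd_eqI, rule has_real_derivative_along_line) (use assms in simp)

lemma has_real_derivative_pd_along:
  fixes f :: "real^'d::finite \<Rightarrow> real"
  assumes "f differentiable (at (y + s *\<^sub>R axis a 1))"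
  shows "((\<lambda>s. f (y + s *\<^sub>R axis a 1)) has_real_derivative pd a f (y + s *\<^sub>R axis a 1)) (at s)"
proof -
  obtain F where "(f has_derivative F) (at (y + s *\<^sub>R axis a 1))"
    using assms differentiable_def by blast
  then show ?thesis using has_real_derivative_along_line pd_eq_frechet by metis
qed

lemma has_real_derivative_pd:
  fixes f :: "real^'d::finite \<Rightarrow> real"
  assumes "f differentiable (at p)"
  shows "((\<lambda>t. f (p + t *\<^sub>R axis a 1)) has_real_derivative pd a f p) (at 0)"
  using has_real_derivative_pd_along[of f p 0 a] assms by simp

lemma pd_const [simp]: "pd a (\<lambda>q. c) p = 0"
  by (rule pd_eqI) simp

lemma pd_add:
  "f differentiable (at p) \<Longrightarrow> h differentiable (at p) \<Longrightarrow>
   pd a (\<lambda>q. f q + h q) p = pd a f p + pd a h p"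
  by (rule pd_eqI) (intro DERIV_add has_real_derivative_pd)

lemma pd_diff:
  "f differentiable (at p) \<Longrightarrow> h differentiable (at p) \<Longrightarrow>
   pd a (\<lambda>q. f q - h q) p = pd a f p - pd a h p"
  by (rule pd_eqI) (intro DERIV_diff has_real_derivative_pd)

lemma pd_mult:
  "f differentiable (at p) \<Longrightarrow> h differentiable (at p) \<Longrightarrow>
   pd a (\<lambda>q. f q * h q) p = pd a f p * h p + f p * pd a h p"
  by (rule pd_eqI)
     (use DERIV_mult[OF has_real_derivative_pd[of f p a] has_real_derivative_pd[of h p a]] in
       \<open>simp add: mult.commute\<close>)

lemma pd_cmult: "f differentiable (at p) \<Longrightarrow> pd a (\<lambda>q. c * f q) p = c * pd a f p"
  by (rule pd_eqI) (intro DERIV_cmult has_real_derivative_pd)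

lemma pd_sum:
  "finite S \<Longrightarrow> (\<And>i. i \<in> S \<Longrightarrow> f i differentiable (at p)) \<Longrightarrow>
   pd a (\<lambda>q. \<Sum>i\<in>S. f i q) p = (\<Sum>i\<in>S. pd a (f i) p)"
  by (rule pd_eqI) (auto intro!: DERIV_sum has_real_derivative_pd)

lemma pd_cong_open:
  fixes p :: "real^'d::finite"
  assumes "open U" "p \<in> U" "\<And>q. q \<in> U \<Longrightarrow> f q = h q"
  shows "pd a f p = pd a h p"
proof -
  have "((\<lambda>t. p + t *\<^sub>R axis a 1) \<longlongrightarrow> p) (nhds 0)"
    by (auto intro!: tendsto_eq_intros filterlim_ident)
  then have "eventually (\<lambda>t. p + t *\<^sub>R axis a 1 \<in> U) (nhds 0)"
    using assms(1,2) by (rule topological_tendstoD)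
  then show ?thesis
    unfolding pd_def by (rule deriv_cong_ev[OF eventually_mono]) (auto simp: assms(3))
qed

lemma differentiable_cong_open:
  assumes "f differentiable (at p)" "open U" "p \<in> U" "\<And>q. q \<in> U \<Longrightarrow> f q = h q"
  shows "h differentiable (at p)"
  using assms has_derivative_transform_within_open unfolding differentiable_def by metis

lemma differentiable_prod:
  fixes f :: "'i \<Rightarrow> 'a::real_normed_vector \<Rightarrow> real"
  shows "finite S \<Longrightarrow> (\<And>i. i \<in> S \<Longrightarrow> f i differentiable (at p)) \<Longrightarrow>
    (\<lambda>q. \<Prod>i\<in>S. f i q) differentiable (at p)"
  by (induction S rule: finite_induct) auto

lemma differentiable_det:
  fixes M :: "'a::real_normed_vector \<Rightarrow> real^'d::finite^'d"
  assumes "\<And>r s. (\<lambda>q. M q $ r $ s) differentiable (at p)"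
  shows "(\<lambda>q. det (M q)) differentiable (at p)"
  unfolding det_def
  by (intro differentiable_sum differentiable_mult differentiable_const ballI)
     (auto simp: finite_permutations assms intro!: differentiable_prod)

section \<open>Symmetry of mixed partial derivatives\<close>

lemma second_difference_mean_value:
  fixes f :: "real^'d::finite \<Rightarrow> real"
  assumes f: "\<And>x. x \<in> ball p r \<Longrightarrow> f differentiable (at x)" and h: "0 < h" "2 * h < r"
  shows "\<exists>\<xi>. 0 < \<xi> \<and> \<xi> < h \<and>
    f (p + h *\<^sub>R axis c 1 + h *\<^sub>R axis d 1) - f (p + h *\<^sub>R axis c 1) - f (p + h *\<^sub>R axis d 1) + f p
    = h * (pd c f (p + h *\<^sub>R axis d 1 + \<xi> *\<^sub>R axis c 1) - pd c f (p + \<xi> *\<^sub>R axis c 1))"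
proof -
  define u :: "real^'d" where "u = axis c 1"
  define v :: "real^'d" where "v = axis d 1"
  have in_ball: "p + a *\<^sub>R v + b *\<^sub>R u \<in> ball p r" if "0 \<le> a" "a \<le> h" "0 \<le> b" "b \<le> h" for a b
  proof -
    have "dist p (p + a *\<^sub>R v + b *\<^sub>R u) = norm (a *\<^sub>R v + b *\<^sub>R u)"
      using norm_minus_cancel[of "a *\<^sub>R v + b *\<^sub>R u"] by (simp add: dist_norm add.assoc)
    also have "\<dots> \<le> a + b"
      using norm_triangle_ineq[of "a *\<^sub>R v" "b *\<^sub>R u"] that by (simp add: u_def v_def)
    finally show ?thesis unfolding mem_ball using that h by linarith
  qed
  define \<phi> where "\<phi> s = f (p + h *\<^sub>R v + s *\<^sub>R u) - f (p + s *\<^sub>R u)" for s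
  have deriv: "DERIV \<phi> s :> pd c f (p + h *\<^sub>R v + s *\<^sub>R u) - pd c f (p + s *\<^sub>R u)" if "0 \<le> s" "s \<le> h" for s
    unfolding \<phi>_def u_def
    by (intro DERIV_diff has_real_derivative_pd_along f)
       (use in_ball[OF _ _ that, of h] in_ball[OF _ _ that, of 0] h in \<open>auto simp: u_def\<close>)
  obtain \<xi> where "0 < \<xi>" "\<xi> < h"
    "\<phi> h - \<phi> 0 = (h - 0) * (pd c f (p + h *\<^sub>R v + \<xi> *\<^sub>R u) - pd c f (p + \<xi> *\<^sub>R u))"
    using MVT2[OF h(1) deriv] by blast
  moreover have "\<phi> h - \<phi> 0 = f (p + h *\<^sub>R u + h *\<^sub>R v) - f (p + h *\<^sub>R u) - f (p + h *\<^sub>R v) + f p"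
    by (simp add: \<phi>_def add_ac)
  ultimately show ?thesis by (auto simp: u_def v_def)
qed

lemma second_difference_estimate:
  fixes f :: "real^'d::finite \<Rightarrow> real"
  assumes f: "\<And>x. x \<in> ball p r \<Longrightarrow> f differentiable (at x)"
    and L: "bounded_linear L"
    and approx: "\<And>y. norm (y - p) < \<delta> \<Longrightarrow> \<bar>pd c f y - pd c f p - L (y - p)\<bar> \<le> \<epsilon> * norm (y - p)"
    and h: "0 < h" "2 * h < r" "2 * h < \<delta>" and "\<epsilon> \<ge> 0"
  shows "\<bar>f (p + h *\<^sub>R axis c 1 + h *\<^sub>R axis d 1) - f (p + h *\<^sub>R axis c 1) - f (p + h *\<^sub>R axis d 1) + f p
          - h\<^sup>2 * L (axis d 1)\<bar> \<le> 3 * \<epsilon> * h\<^sup>2"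
proof -
  define u :: "real^'d" where "u = axis c 1"
  define v :: "real^'d" where "v = axis d 1"
  obtain \<xi> where \<xi>: "0 < \<xi>" "\<xi> < h" and mv:
    "f (p + h *\<^sub>R u + h *\<^sub>R v) - f (p + h *\<^sub>R u) - f (p + h *\<^sub>R v) + f p
     = h * (pd c f (p + h *\<^sub>R v + \<xi> *\<^sub>R u) - pd c f (p + \<xi> *\<^sub>R u))"
    using second_difference_mean_value[OF f h(1,2)] unfolding u_def v_def by blast
  have "norm (h *\<^sub>R v + \<xi> *\<^sub>R u) \<le> h + \<xi>"
    using norm_triangle_ineq[of "h *\<^sub>R v" "\<xi> *\<^sub>R u"] \<xi> h by (simp add: u_def v_def)
  then have E1: "\<bar>pd c f (p + h *\<^sub>R v + \<xi> *\<^sub>R u) - pd c f p - L (h *\<^sub>R v + \<xi> *\<^sub>R u)\<bar> \<le> \<epsilon> * (h + \<xi>)"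
    using approx[of "p + h *\<^sub>R v + \<xi> *\<^sub>R u"] \<xi> h \<open>\<epsilon> \<ge> 0\<close>
    by (simp add: add.assoc) (meson mult_left_mono order_trans)
  have E2: "\<bar>pd c f (p + \<xi> *\<^sub>R u) - pd c f p - L (\<xi> *\<^sub>R u)\<bar> \<le> \<epsilon> * \<xi>"
    using approx[of "p + \<xi> *\<^sub>R u"] \<xi> h by (simp add: u_def)
  have "L (h *\<^sub>R v + \<xi> *\<^sub>R u) - L (\<xi> *\<^sub>R u) = h * L v"
    using L by (simp add: bounded_linear.linear linear_add linear_scale)
  then have bound: "\<bar>pd c f (p + h *\<^sub>R v + \<xi> *\<^sub>R u) - pd c f (p + \<xi> *\<^sub>R u) - h * L v\<bar> \<le> 3 * \<epsilon> * h"
    using E1 E2 \<xi> mult_left_mono[of \<xi> h \<epsilon>] \<open>\<epsilon> \<ge> 0\<close> by (simp add: algebra_simps)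
  have split: "f (p + h *\<^sub>R u + h *\<^sub>R v) - f (p + h *\<^sub>R u) - f (p + h *\<^sub>R v) + f p - h\<^sup>2 * L v
      = h * (pd c f (p + h *\<^sub>R v + \<xi> *\<^sub>R u) - pd c f (p + \<xi> *\<^sub>R u) - h * L v)"
    unfolding mv by (simp add: power2_eq_square right_diff_distrib)
  have "\<bar>h * (pd c f (p + h *\<^sub>R v + \<xi> *\<^sub>R u) - pd c f (p + \<xi> *\<^sub>R u) - h * L v)\<bar> \<le> 3 * \<epsilon> * h\<^sup>2"
    using mult_left_mono[OF bound, of h] h by (simp add: abs_mult power2_eq_square mult_ac)
  then show ?thesis unfolding u_def[symmetric] v_def[symmetric] split .
qed

lemma frechet_mixed_partials_close:
  fixes f :: "real^'d::finite \<Rightarrow> real"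
  assumes f: "\<And>x. x \<in> ball p r \<Longrightarrow> f differentiable (at x)" and "r > 0"
    and Lc: "(pd c f has_derivative Lc) (at p)" and Ld: "(pd d f has_derivative Ld) (at p)"
    and e: "\<epsilon> > 0"
  shows "\<bar>Lc (axis d 1) - Ld (axis c 1)\<bar> \<le> 6 * \<epsilon>"
proof -
  obtain \<delta>c where \<delta>c: "\<delta>c > 0"
    "\<And>y. norm (y - p) < \<delta>c \<Longrightarrow> norm (pd c f y - pd c f p - Lc (y - p)) \<le> \<epsilon> * norm (y - p)"
    using Lc e unfolding has_derivative_at_alt by blast
  obtain \<delta>d where \<delta>d: "\<delta>d > 0"
    "\<And>y. norm (y - p) < \<delta>d \<Longrightarrow> norm (pd d f y - pd d f p - Ld (y - p)) \<le> \<epsilon> * norm (y - p)"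
    using Ld e unfolding has_derivative_at_alt by blast
  define h where "h = min (min \<delta>c \<delta>d) r / 4"
  have h: "0 < h" "2 * h < r" "2 * h < \<delta>c" "2 * h < \<delta>d" using \<delta>c \<delta>d \<open>r > 0\<close> by (auto simp: h_def)
  have A: "\<bar>f (p + h *\<^sub>R axis c 1 + h *\<^sub>R axis d 1) - f (p + h *\<^sub>R axis c 1) - f (p + h *\<^sub>R axis d 1) + f p
        - h\<^sup>2 * Lc (axis d 1)\<bar> \<le> 3 * \<epsilon> * h\<^sup>2"
    by (rule second_difference_estimate[OF f has_derivative_bounded_linear[OF Lc], where \<delta>=\<delta>c])
       (use \<delta>c h e in auto)
  have B: "\<bar>f (p + h *\<^sub>R axis d 1 + h *\<^sub>R axis c 1) - f (p + h *\<^sub>R axis d 1) - f (p + h *\<^sub>R axis c 1) + f p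
        - h\<^sup>2 * Ld (axis c 1)\<bar> \<le> 3 * \<epsilon> * h\<^sup>2"
    by (rule second_difference_estimate[OF f has_derivative_bounded_linear[OF Ld], where \<delta>=\<delta>d])
       (use \<delta>d h e in auto)
  have swap: "p + h *\<^sub>R axis d 1 + h *\<^sub>R axis c 1 = p + h *\<^sub>R axis c 1 + h *\<^sub>R axis d 1"
    by (simp add: add_ac)
  have "\<bar>h\<^sup>2 * Lc (axis d 1) - h\<^sup>2 * Ld (axis c 1)\<bar> \<le> 6 * \<epsilon> * h\<^sup>2"
    using A B[unfolded swap] by linarith
  then have "h\<^sup>2 * \<bar>Lc (axis d 1) - Ld (axis c 1)\<bar> \<le> h\<^sup>2 * (6 * \<epsilon>)"
    by (simp only: right_diff_distrib[symmetric] abs_mult) (simp add: mult_ac)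
  then show ?thesis using h by simp
qed

theorem pd_commute:
  fixes f :: "real^'d::finite \<Rightarrow> real"
  assumes U: "open U" "p \<in> U" and f: "f differentiable_on U"
    and fc: "pd c f differentiable_on U" and fd: "pd d f differentiable_on U"
  shows "pd c (pd d f) p = pd d (pd c f) p"
proof -
  obtain Lc where Lc: "(pd c f has_derivative Lc) (at p)"
    using fc U differentiable_on_eq_differentiable_at differentiable_def by blast
  obtain Ld where Ld: "(pd d f has_derivative Ld) (at p)"
    using fd U differentiable_on_eq_differentiable_at differentiable_def by blast
  obtain r where r: "r > 0" "ball p r \<subseteq> U" using U open_contains_ball by blast
  have "\<And>x. x \<in> ball p r \<Longrightarrow> f differentiable (at x)"
    using f U r differentiable_on_eq_differentiable_at by blast
  note close = frechet_mixed_partials_close[OF this r(1) Lc Ld]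
  have "Lc (axis d 1) = Ld (axis c 1)"
    using close[of "\<bar>Lc (axis d 1) - Ld (axis c 1)\<bar> / 12"] by (cases "Lc (axis d 1) = Ld (axis c 1)") auto
  then show ?thesis using pd_eq_frechet[OF Lc] pd_eq_frechet[OF Ld] by simp
qed

section \<open>The inverse metric of a null basis\<close>

lemma matrix_inv_mult:
  fixes A :: "real^'n::finite^'n"
  assumes "invertible A"
  shows "A ** matrix_inv A = mat 1" "matrix_inv A ** A = mat 1"
  using someI_ex[OF assms[unfolded invertible_def]] unfolding matrix_inv_def by auto

lemma matrix_inv_eqI:
  fixes A B :: "real^'n::finite^'n"
  assumes "invertible A" "B ** A = mat 1"
  shows "matrix_inv A = B"
proof -
  have "B = B ** (A ** matrix_inv A)" by (simp add: matrix_inv_mult(1)[OF assms(1)])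
  also have "\<dots> = matrix_inv A" by (simp add: matrix_mul_assoc assms(2))
  finally show ?thesis by simp
qed

lemma matrix_inv_symmetric:
  fixes A :: "real^'n::finite^'n"
  assumes "invertible A" "\<And>a b. A $ a $ b = A $ b $ a"
  shows "matrix_inv A $ a $ b = matrix_inv A $ b $ a"
proof -
  have "transpose A = A" using assms(2) by (simp add: transpose_def vec_eq_iff)
  then have "transpose (matrix_inv A) ** A = mat 1"
    using arg_cong[OF matrix_inv_mult(1)[OF assms(1)], of transpose]
    by (simp add: matrix_transpose_mul)
  then have "matrix_inv A = transpose (matrix_inv A)" by (rule matrix_inv_eqI[OF assms(1)])
  then have "matrix_inv A $ a $ b = transpose (matrix_inv A) $ a $ b" by simp
  then show ?thesis by (simp add: transpose_def)
qed

lemma matrix_inv_cramer: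
  fixes A :: "real^'n::finite^'n"
  assumes "invertible A"
  shows "matrix_inv A $ i $ j = det (\<chi> r s. if s = i then axis j 1 $ r else A $ r $ s) / det A"
proof -
  define x where "x = matrix_inv A *v axis j 1"
  have "A *v x = axis j 1"
    by (simp add: x_def matrix_vector_mul_assoc matrix_inv_mult[OF assms])
  then have "x = (\<chi> k. det (\<chi> r s. if s = k then axis j 1 $ r else A $ r $ s) / det A)"
    using cramer assms invertible_det_nz by blast
  then have "x $ i = det (\<chi> r s. if s = i then axis j 1 $ r else A $ r $ s) / det A"
    by simp
  moreover have "x $ i = matrix_inv A $ i $ j"
    by (simp add: x_def matrix_vector_mult_def axis_def if_distrib cong: if_cong)
  ultimately show ?thesis by simp
qed

definition metric_form :: "real^'d::finite^'d \<Rightarrow> real^'d \<Rightarrow> real^'d \<Rightarrow> real" where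
  "metric_form G u v = (\<Sum>a\<in>UNIV. \<Sum>b\<in>UNIV. G $ a $ b * u $ a * v $ b)"

lemma gdot_eq_metric_form: "gdot g p u v = metric_form (g p) u v"
  by (simp add: gdot_def metric_form_def)

lemma metric_form_eq_inner: "metric_form G u v = (\<chi> b. \<Sum>a\<in>UNIV. G $ a $ b * u $ a) \<bullet> v"
  unfolding metric_form_def inner_vec_def by (subst sum.swap) (simp add: sum_distrib_right)

lemma metric_form_linear_right:
  "metric_form G u (x + y) = metric_form G u x + metric_form G u y"
  "metric_form G u (c *\<^sub>R x) = c * metric_form G u x"
  "metric_form G u (\<Sum>i\<in>S. f i) = (\<Sum>i\<in>S. metric_form G u (f i))"
  by (simp_all only: metric_form_eq_inner inner_add_right inner_scaleR_right inner_sum_right)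

lemma metric_form_mult_vector: "(\<Sum>c\<in>UNIV. u $ c * (G *v x) $ c) = metric_form G u x"
  unfolding metric_form_def matrix_vector_mult_def
  by (simp add: sum_distrib_left) (intro sum.cong refl, simp add: mult_ac)

definition frame_inverse :: "real^'d::finite \<Rightarrow> real^'d \<Rightarrow> (nat \<Rightarrow> real^'d) \<Rightarrow> real^'d^'d" where
  "frame_inverse l n m =
     (\<chi> a c. l $ a * n $ c + n $ a * l $ c + (\<Sum>k\<in>{2..<CARD('d)}. m k $ a * m k $ c))"

locale null_basis =
  fixes G :: "real^'d::finite^'d" and l n :: "real^'d" and m :: "nat \<Rightarrow> real^'d"
  assumes symmetric: "\<And>a b. G $ a $ b = G $ b $ a"
    and card_ge_2: "CARD('d) \<ge> 2"
    and l_null: "metric_form G l l = 0" and n_null: "metric_form G n n = 0"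
    and l_n: "metric_form G l n = 1"
    and l_m: "\<And>i. i \<in> {2..<CARD('d)} \<Longrightarrow> metric_form G l (m i) = 0"
    and n_m: "\<And>i. i \<in> {2..<CARD('d)} \<Longrightarrow> metric_form G n (m i) = 0"
    and m_m: "\<And>i j. i \<in> {2..<CARD('d)} \<Longrightarrow> j \<in> {2..<CARD('d)} \<Longrightarrow>
               metric_form G (m i) (m j) = (if i = j then 1 else 0)"
begin

lemma metric_form_commute: "metric_form G u v = metric_form G v u"
  unfolding metric_form_def by (subst sum.swap) (simp add: symmetric mult_ac)

lemma frame_inverse_mult_vector:
  "frame_inverse l n m *v (G *v x)
     = metric_form G n x *\<^sub>R l + metric_form G l x *\<^sub>R n
       + (\<Sum>k\<in>{2..<CARD('d)}. metric_form G (m k) x *\<^sub>R m k)"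
proof -
  have "frame_inverse l n m *v y = (\<Sum>c\<in>UNIV. n $ c * y $ c) *\<^sub>R l + (\<Sum>c\<in>UNIV. l $ c * y $ c) *\<^sub>R n
     + (\<Sum>k\<in>{2..<CARD('d)}. (\<Sum>c\<in>UNIV. m k $ c * y $ c) *\<^sub>R m k)" for y
    unfolding frame_inverse_def matrix_vector_mult_def vec_eq_iff
    by (simp add: ring_distribs sum.distrib sum_distrib_left sum_distrib_right)
       (subst (2) sum.swap, simp add: mult_ac)
  then show ?thesis by (simp add: metric_form_mult_vector)
qed

definition frame :: "(real^'d) set" where "frame = insert l (insert n (m ` {2..<CARD('d)}))"

lemma frame_vectors_distinct:
  "l \<noteq> n" "l \<notin> m ` {2..<CARD('d)}" "n \<notin> m ` {2..<CARD('d)}" "inj_on m {2..<CARD('d)}"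
proof -
  show "l \<noteq> n" using l_null l_n by auto
  show "l \<notin> m ` {2..<CARD('d)}" using l_n n_m metric_form_commute[of n l] by force
  show "n \<notin> m ` {2..<CARD('d)}" using l_n l_m by force
  show "inj_on m {2..<CARD('d)}"
  proof (rule inj_onI)
    fix i j assume "i \<in> {2..<CARD('d)}" "j \<in> {2..<CARD('d)}" "m i = m j"
    then show "i = j" using m_m[of i i] m_m[of i j] by (auto split: if_splits)
  qed
qed

lemma sum_frame: "(\<Sum>v\<in>frame. f v) = f l + f n + (\<Sum>k\<in>{2..<CARD('d)}. f (m k))"
  using frame_vectors_distinct by (simp add: frame_def sum.reindex add.assoc)

lemma independent_frame: "independent frame"
  unfolding independent_explicit
proof (intro conjI allI impI ballI)
  show "finite frame" by (simp add: frame_def)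
next
  fix c v assume "(\<Sum>v\<in>frame. c v *\<^sub>R v) = 0" and v: "v \<in> frame"
  then have "metric_form G w (c l *\<^sub>R l + c n *\<^sub>R n + (\<Sum>k\<in>{2..<CARD('d)}. c (m k) *\<^sub>R m k)) = 0" for w
    by (simp add: sum_frame metric_form_eq_inner)
  then have e: "c l * metric_form G w l + c n * metric_form G w n
      + (\<Sum>k\<in>{2..<CARD('d)}. c (m k) * metric_form G w (m k)) = 0" for w
    by (simp add: metric_form_linear_right)
  have "c l = 0" using e[of n] n_m by (simp add: n_null metric_form_commute[of n l] l_n)
  moreover have "c n = 0" using e[of l] l_m by (simp add: l_null l_n)
  moreover have "c (m j) = 0" if j: "j \<in> {2..<CARD('d)}" for j
  proof -
    have "(\<Sum>k\<in>{2..<CARD('d)}. c (m k) * metric_form G (m j) (m k))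
        = (\<Sum>k\<in>{2..<CARD('d)}. if k = j then c (m k) else 0)"
      by (rule sum.cong) (use j m_m in auto)
    then show ?thesis
      using e[of "m j"] j
      by (simp add: metric_form_commute[of "m j" l] metric_form_commute[of "m j" n] l_m n_m)
  qed
  ultimately show "c v = 0" using v by (auto simp: frame_def)
qed

lemma span_frame: "span frame = UNIV"
proof -
  have "card (m ` {2..<CARD('d)}) = CARD('d) - 2"
    using frame_vectors_distinct(4) by (simp add: card_image)
  then have "card frame = CARD('d)"
    using frame_vectors_distinct card_ge_2 by (simp add: frame_def)
  then have "UNIV \<subseteq> span frame"
    by (intro card_ge_dim_independent[OF _ independent_frame]) simp_all
  then show ?thesis by auto
qed

lemma frame_inverse_mult_vector_frame:
  "frame_inverse l n m *v (G *v l) = l" "frame_inverse l n m *v (G *v n) = n"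
  "j \<in> {2..<CARD('d)} \<Longrightarrow> frame_inverse l n m *v (G *v m j) = m j"
proof -
  have "(\<Sum>k\<in>{2..<CARD('d)}. metric_form G (m k) l *\<^sub>R m k) = 0"
    using l_m by (simp add: metric_form_commute[of "m _" l])
  then show "frame_inverse l n m *v (G *v l) = l"
    by (simp add: frame_inverse_mult_vector l_null metric_form_commute[of n l] l_n)
  have "(\<Sum>k\<in>{2..<CARD('d)}. metric_form G (m k) n *\<^sub>R m k) = 0"
    using n_m by (simp add: metric_form_commute[of "m _" n])
  then show "frame_inverse l n m *v (G *v n) = n"
    by (simp add: frame_inverse_mult_vector n_null l_n)
  assume j: "j \<in> {2..<CARD('d)}"
  have "(\<Sum>k\<in>{2..<CARD('d)}. metric_form G (m k) (m j) *\<^sub>R m k)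
      = (\<Sum>k\<in>{2..<CARD('d)}. if k = j then m k else 0)"
    by (rule sum.cong) (use j m_m in auto)
  then show "frame_inverse l n m *v (G *v m j) = m j"
    using j by (simp add: frame_inverse_mult_vector metric_form_commute[of "m j"] l_m n_m)
qed

lemma frame_inverse_mult: "frame_inverse l n m ** G = mat 1"
proof -
  have "frame_inverse l n m *v (G *v x) = x" for x
  proof (rule linear_eq_on_span[of _ _ frame])
    show "linear (\<lambda>x. frame_inverse l n m *v (G *v x))" by (simp add: matrix_vector_mul_assoc)
    show "x \<in> span frame" by (simp add: span_frame)
  next
    fix v assume "v \<in> frame"
    then show "frame_inverse l n m *v (G *v v) = v"
      by (auto simp: frame_def frame_inverse_mult_vector_frame)
  qed (simp add: linear_iff)
  then show ?thesis by (simp add: matrix_eq matrix_vector_mul_assoc)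
qed

lemma invertible: "invertible G"
  unfolding invertible_def
  using frame_inverse_mult matrix_left_right_inverse by blast

lemma matrix_inv_eq_frame_inverse: "matrix_inv G = frame_inverse l n m"
  by (rule matrix_inv_eqI[OF invertible frame_inverse_mult])

end

section \<open>Identities for index sums and the contracted Weyl tensor\<close>

lemma sum_kronecker_mult:
  "(\<Sum>f\<in>(UNIV::'a::finite set). (if a = f then 1 else 0) * (X f :: 'b::semiring_1)) = X a"
proof -
  have "(\<Sum>f\<in>(UNIV::'a set). (if a = f then 1 else 0) * X f) = (\<Sum>f\<in>UNIV. if a = f then X f else 0)"
    by (rule sum.cong) auto
  then show ?thesis by simp
qed

lemma sum_swap_mult:
  "(\<Sum>e\<in>(UNIV::'a::finite set). A e * (\<Sum>f\<in>(UNIV::'a set). B e f * X f))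
   = (\<Sum>f\<in>UNIV. (\<Sum>e\<in>UNIV. A e * B e f) * (X f :: real))"
  by (simp add: sum_distrib_left sum_distrib_right mult.assoc) (rule sum.swap)

lemma sum_rotate3:
  "(\<Sum>x\<in>(UNIV::'a::finite set). \<Sum>y\<in>(UNIV::'b::finite set). \<Sum>z\<in>(UNIV::'c::finite set). F x y z)
   = (\<Sum>y\<in>UNIV. \<Sum>z\<in>UNIV. \<Sum>x\<in>UNIV. (F x y z :: 'e::comm_monoid_add))"
  by (subst sum.swap) (rule sum.cong[OF refl], rule sum.swap)

lemma sum_swap_pairs:
  "(\<Sum>a\<in>(UNIV::'a::finite set). \<Sum>b\<in>(UNIV::'b::finite set). \<Sum>c\<in>(UNIV::'c::finite set).
      \<Sum>d\<in>(UNIV::'e::finite set). F a b c d)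
   = (\<Sum>c\<in>UNIV. \<Sum>d\<in>UNIV. \<Sum>a\<in>UNIV. \<Sum>b\<in>UNIV. (F a b c d :: 'f::comm_monoid_add))"
  by (subst sum_rotate3, subst sum_rotate3) (rule sum.cong[OF refl], rule sum_rotate3)

lemma pair_symmetric_if_bianchi:
  fixes T :: "'a \<Rightarrow> 'a \<Rightarrow> 'a \<Rightarrow> 'a \<Rightarrow> real"
  assumes A1: "\<And>a b c d. T a b c d = - T b a c d" and A2: "\<And>a b c d. T a b c d = - T a b d c"
    and C: "\<And>a b c d. T a b c d + T a c d b + T a d b c = 0"
  shows "T a b c d = T c d a b"
  using C[of a b c d] C[of b c d a] C[of c d a b] C[of d a b c]
    A1[of a b c d] A1[of a c d b] A1[of a d b c] A1[of b c d a] A1[of b d a c] A1[of b a c d]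
    A1[of c d a b] A1[of c a b d] A1[of c b d a] A1[of d a b c] A1[of d b c a] A1[of d c a b]
    A2[of a b c d] A2[of a c d b] A2[of a d b c] A2[of b c d a] A2[of b d a c] A2[of b a c d]
    A2[of c d a b] A2[of c a b d] A2[of c b d a] A2[of d a b c] A2[of d b c a] A2[of d c a b]
  by linarith

lemma vanishes_if_antisym_cyclic:
  fixes P :: "'a \<Rightarrow> 'a \<Rightarrow> 'a \<Rightarrow> real"
  assumes antisym: "\<And>i j k. P i j k = - P i k j"
    and cyclic: "\<And>i j k. P i j k + P j k i + P k i j = 0"
    and sym: "\<And>i j k. i \<in> I \<Longrightarrow> j \<in> I \<Longrightarrow> k \<in> I \<Longrightarrow> P j k i + P i k j = 0"
    and "i \<in> I" "j \<in> I" "k \<in> I"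
  shows "P i j k = 0"
  using sym[of i j k] sym[of j k i] cyclic[of i j k] antisym[of i k j] antisym[of j i k] assms(4-6)
  by linarith

lemma riemann_up_antisym_right: "riemann_up g p a b c d = - riemann_up g p a b d c"
  unfolding riemann_up_def by (simp add: sum_subtractf)

lemma riemann_antisym_right: "riemann g p a b c d = - riemann g p a b d c"
  unfolding riemann_def by (subst riemann_up_antisym_right) (simp add: sum_negf)

lemma weyl_comp_antisym_right: "weyl_comp g p a b c d = - weyl_comp g p a b d c"
  by (simp add: weyl_comp_def Let_def riemann_antisym_right[of g p a b c d] algebra_simps)

lemma weyl_add:
  "weyl g p (u + u') v w x = weyl g p u v w x + weyl g p u' v w x"
  "weyl g p u (v + v') w x = weyl g p u v w x + weyl g p u v' w x"
  "weyl g p u v (w + w') x = weyl g p u v w x + weyl g p u v w' x"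
  "weyl g p u v w (x + x') = weyl g p u v w x + weyl g p u v w x'"
  unfolding weyl_def by (simp_all add: algebra_simps sum.distrib)

lemma weyl_scaleR:
  "weyl g p (c *\<^sub>R u) v w x = c * weyl g p u v w x"
  "weyl g p u (c *\<^sub>R v) w x = c * weyl g p u v w x"
  "weyl g p u v (c *\<^sub>R w) x = c * weyl g p u v w x"
  "weyl g p u v w (c *\<^sub>R x) = c * weyl g p u v w x"
  unfolding weyl_def by (simp_all add: sum_distrib_left mult_ac)

lemma weyl_zero:
  "weyl g p 0 v w x = 0" "weyl g p u 0 w x = 0" "weyl g p u v 0 x = 0" "weyl g p u v w 0 = 0"
  unfolding weyl_def by simp_all

lemma weyl_minus:
  "weyl g p (- u) v w x = - weyl g p u v w x"
  "weyl g p u (- v) w x = - weyl g p u v w x"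
  "weyl g p u v (- w) x = - weyl g p u v w x"
  "weyl g p u v w (- x) = - weyl g p u v w x"
  using weyl_scaleR[where c="-1"] by simp_all

lemma weyl_sum:
  "weyl g p (\<Sum>k\<in>S. f k) v w x = (\<Sum>k\<in>S. weyl g p (f k) v w x)"
  "weyl g p u (\<Sum>k\<in>S. f k) w x = (\<Sum>k\<in>S. weyl g p u (f k) w x)"
  "weyl g p u v (\<Sum>k\<in>S. f k) x = (\<Sum>k\<in>S. weyl g p u v (f k) x)"
  "weyl g p u v w (\<Sum>k\<in>S. f k) = (\<Sum>k\<in>S. weyl g p u v w (f k))"
  by (induction S rule: infinite_finite_induct) (simp_all add: weyl_add weyl_zero)

lemma has_real_derivative_weyl:
  assumes "\<And>a. ((\<lambda>t. u t $ a) has_real_derivative u' $ a) (at 0)"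
    "\<And>a. ((\<lambda>t. v t $ a) has_real_derivative v' $ a) (at 0)"
    "\<And>a. ((\<lambda>t. w t $ a) has_real_derivative w' $ a) (at 0)"
    "\<And>a. ((\<lambda>t. x t $ a) has_real_derivative x' $ a) (at 0)"
    and "u 0 = u\<^sub>0" "v 0 = v\<^sub>0" "w 0 = w\<^sub>0" "x 0 = x\<^sub>0"
  shows "((\<lambda>t. weyl g p (u t) (v t) (w t) (x t)) has_real_derivative
     weyl g p u' v\<^sub>0 w\<^sub>0 x\<^sub>0 + weyl g p u\<^sub>0 v' w\<^sub>0 x\<^sub>0
     + weyl g p u\<^sub>0 v\<^sub>0 w' x\<^sub>0 + weyl g p u\<^sub>0 v\<^sub>0 w\<^sub>0 x') (at 0)"
proof -
  have "((\<lambda>t. weyl g p (u t) (v t) (w t) (x t)) has_real_derivative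
     (\<Sum>a\<in>UNIV. \<Sum>b\<in>UNIV. \<Sum>c\<in>UNIV. \<Sum>d\<in>UNIV. weyl_comp g p a b c d *
        (u' $ a * v 0 $ b * w 0 $ c * x 0 $ d + u 0 $ a * v' $ b * w 0 $ c * x 0 $ d
         + u 0 $ a * v 0 $ b * w' $ c * x 0 $ d + u 0 $ a * v 0 $ b * w 0 $ c * x' $ d))) (at 0)"
    unfolding weyl_def
    by (intro DERIV_sum) (auto intro!: derivative_eq_intros assms(1-4) simp: algebra_simps)
  then show ?thesis
    unfolding weyl_def assms(5-8) by (simp add: algebra_simps sum.distrib)
qed

lemma weyl_antisym_right: "weyl g p u v w x = - weyl g p u v x w"
proof -
  have "weyl g p u v w x = (\<Sum>a\<in>UNIV. \<Sum>b\<in>UNIV. \<Sum>d\<in>UNIV. \<Sum>c\<in>UNIV.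
      weyl_comp g p a b c d * u $ a * v $ b * w $ c * x $ d)"
    unfolding weyl_def by (rule sum.cong[OF refl], rule sum.cong[OF refl], rule sum.swap)
  also have "\<dots> = (\<Sum>a\<in>UNIV. \<Sum>b\<in>UNIV. \<Sum>d\<in>UNIV. \<Sum>c\<in>UNIV.
      - (weyl_comp g p a b d c * u $ a * v $ b * x $ d * w $ c))"
    apply (intro sum.cong refl)
    subgoal for a b d c using weyl_comp_antisym_right[of g p a b c d] by simp
    done
  finally show ?thesis by (simp add: weyl_def sum_negf)
qed

section \<open>Curvature of a smooth metric\<close>

locale smooth_metric =
  fixes U :: "(real^'d::finite) set" and g :: "real^'d \<Rightarrow> real^'d^'d"
  assumes open_U: "open U"
    and smooth: "\<And>a b. C_inf_on U (\<lambda>p. g p $ a $ b)"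
    and symmetric: "\<And>p a b. p \<in> U \<Longrightarrow> g p $ a $ b = g p $ b $ a"
    and invertible: "\<And>p. p \<in> U \<Longrightarrow> invertible (g p)"
begin

lemma differentiable_on_pd_metric: "foldr pd ds (\<lambda>q. g q $ a $ b) differentiable_on U"
  using smooth unfolding C_inf_on_def by blast

lemma differentiable_pd_metric: "p \<in> U \<Longrightarrow> foldr pd ds (\<lambda>q. g q $ a $ b) differentiable (at p)"
  using differentiable_on_pd_metric differentiable_on_eq_differentiable_at[OF open_U] by blast

lemma differentiable_metric: "p \<in> U \<Longrightarrow> (\<lambda>q. g q $ a $ b) differentiable (at p)"
  using differentiable_pd_metric[of p "[]"] by simp

lemma differentiable_metric_pd: "p \<in> U \<Longrightarrow> pd c (\<lambda>q. g q $ a $ b) differentiable (at p)"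
  using differentiable_pd_metric[of p "[c]"] by simp

lemma inverse_metric_symmetric: "p \<in> U \<Longrightarrow> matrix_inv (g p) $ a $ c = matrix_inv (g p) $ c $ a"
  using matrix_inv_symmetric invertible symmetric by blast

lemma inverse_metric_metric:
  "p \<in> U \<Longrightarrow> (\<Sum>e\<in>UNIV. matrix_inv (g p) $ a $ e * g p $ e $ f) = (if a = f then 1 else 0)"
  using matrix_inv_mult(2)[OF invertible, of p] by (simp add: matrix_matrix_mult_def mat_def vec_eq_iff)

lemma metric_inverse_metric:
  "p \<in> U \<Longrightarrow> (\<Sum>e\<in>UNIV. g p $ a $ e * matrix_inv (g p) $ e $ f) = (if a = f then 1 else 0)"
  using matrix_inv_mult(1)[OF invertible, of p] by (simp add: matrix_matrix_mult_def mat_def vec_eq_iff)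

lemma differentiable_inverse_metric: "p \<in> U \<Longrightarrow> (\<lambda>q. matrix_inv (g q) $ i $ j) differentiable (at p)"
proof -
  assume p: "p \<in> U"
  have "(\<lambda>q. det (\<chi> r s. if s = i then axis j 1 $ r else g q $ r $ s) / det (g q)) differentiable (at p)"
    using invertible[OF p] invertible_det_nz
  proof (intro differentiable_divide differentiable_det)
    show "(\<lambda>q. (\<chi> r s. if s = i then axis j 1 $ r else g q $ r $ s) $ r $ s) differentiable (at p)" for r s
      by (cases "s = i") (simp_all add: differentiable_metric[OF p])
  qed (use invertible[OF p] invertible_det_nz differentiable_metric[OF p] in auto)
  then show ?thesis
    by (rule differentiable_cong_open[OF _ open_U p]) (simp add: matrix_inv_cramer[OF invertible])
qed

lemma differentiable_christoffel: "p \<in> U \<Longrightarrow> (\<lambda>q. christoffel g q a b c) differentiable (at p)"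
  unfolding christoffel_def
  by (intro differentiable_mult differentiable_const differentiable_sum ballI differentiable_add
      differentiable_diff differentiable_inverse_metric differentiable_metric_pd) auto

definition "metric_pd p c a b = pd c (\<lambda>q. g q $ a $ b) p"

definition "metric_pd2 p c d a b = pd c (pd d (\<lambda>q. g q $ a $ b)) p"

definition "christoffel_lower p a b c = (\<Sum>e\<in>UNIV. g p $ a $ e * christoffel g p e b c)"

definition "christoffel_pd p c a d b = pd c (\<lambda>q. christoffel g q a d b) p"

definition "christoffel_square p c a d b = (\<Sum>e\<in>UNIV. christoffel_lower p e c a * christoffel g p e d b)"

lemma metric_pd_symmetric: "p \<in> U \<Longrightarrow> metric_pd p c a b = metric_pd p c b a"
  unfolding metric_pd_def by (rule pd_cong_open[OF open_U]) (use symmetric in auto)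

lemma metric_pd2_symmetric: "p \<in> U \<Longrightarrow> metric_pd2 p c d a b = metric_pd2 p c d b a"
  unfolding metric_pd2_def
  by (rule pd_cong_open[OF open_U], assumption, rule pd_cong_open[OF open_U]) (use symmetric in auto)

lemma metric_pd2_commute: "p \<in> U \<Longrightarrow> metric_pd2 p c d a b = metric_pd2 p d c a b"
  unfolding metric_pd2_def
  by (rule pd_commute[OF open_U]) (use differentiable_on_pd_metric[of "[]"]
      differentiable_on_pd_metric[of "[c]"] differentiable_on_pd_metric[of "[d]"] in simp_all)

lemma christoffel_eq_metric_pd:
  "christoffel g p a b c
     = (1/2) * (\<Sum>f\<in>UNIV. matrix_inv (g p) $ a $ f * (metric_pd p b f c + metric_pd p c f b - metric_pd p f b c))"
  by (simp add: christoffel_def metric_pd_def)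

lemma christoffel_lower_eq:
  assumes p: "p \<in> U"
  shows "christoffel_lower p a b c = (1/2) * (metric_pd p b a c + metric_pd p c a b - metric_pd p a b c)"
proof -
  define X where "X f = metric_pd p b f c + metric_pd p c f b - metric_pd p f b c" for f
  have "christoffel_lower p a b c
      = (1/2) * (\<Sum>e\<in>UNIV. g p $ a $ e * (\<Sum>f\<in>UNIV. matrix_inv (g p) $ e $ f * X f))"
    by (simp add: christoffel_lower_def christoffel_eq_metric_pd X_def sum_distrib_left mult_ac)
  also have "\<dots> = (1/2) * X a"
    by (simp add: sum_swap_mult metric_inverse_metric[OF p] sum_kronecker_mult)
  finally show ?thesis by (simp add: X_def)
qed

lemma christoffel_eq_raise:
  "p \<in> U \<Longrightarrow> christoffel g p a b c = (\<Sum>f\<in>UNIV. matrix_inv (g p) $ a $ f * christoffel_lower p f b c)"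
  by (simp add: christoffel_eq_metric_pd christoffel_lower_eq sum_distrib_left mult_ac)

lemma christoffel_symmetric: "p \<in> U \<Longrightarrow> christoffel g p a b c = christoffel g p a c b"
  by (simp add: christoffel_eq_metric_pd metric_pd_symmetric[of p _ b c] add.commute)

lemma metric_pd_eq_christoffel_lower:
  assumes p: "p \<in> U"
  shows "metric_pd p c a e = christoffel_lower p a c e + christoffel_lower p e c a"
proof -
  have "metric_pd p c e a = metric_pd p c a e" "metric_pd p a e c = metric_pd p a c e"
    "metric_pd p e c a = metric_pd p e a c"
    using metric_pd_symmetric[OF p] by blast+
  then show ?thesis by (simp add: christoffel_lower_eq[OF p] algebra_simps)
qed

lemma pd_christoffel_lower:
  assumes p: "p \<in> U"
  shows "(\<Sum>e\<in>UNIV. metric_pd p c a e * christoffel g p e d b + g p $ a $ e * christoffel_pd p c e d b)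
     = (1/2) * (metric_pd2 p c d a b + metric_pd2 p c b a d - metric_pd2 p c a d b)"
proof -
  have "(\<Sum>e\<in>UNIV. metric_pd p c a e * christoffel g p e d b + g p $ a $ e * christoffel_pd p c e d b)
      = pd c (\<lambda>q. \<Sum>e\<in>UNIV. g q $ a $ e * christoffel g q e d b) p"
    by (simp add: pd_sum pd_mult differentiable_metric[OF p] differentiable_christoffel[OF p]
        metric_pd_def christoffel_pd_def)
  also have "\<dots> = pd c (\<lambda>q. (1/2) * (pd d (\<lambda>q. g q $ a $ b) q + pd b (\<lambda>q. g q $ a $ d) q
                                      - pd a (\<lambda>q. g q $ d $ b) q)) p"
    by (rule pd_cong_open[OF open_U p])
       (simp add: christoffel_lower_def[symmetric] christoffel_lower_eq metric_pd_def)
  also have "\<dots> = (1/2) * (metric_pd2 p c d a b + metric_pd2 p c b a d - metric_pd2 p c a d b)"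
  proof -
    have sum: "(\<lambda>q. pd d (\<lambda>q. g q $ a $ b) q + pd b (\<lambda>q. g q $ a $ d) q) differentiable (at p)"
      by (intro differentiable_add differentiable_metric_pd[OF p])
    then have "(\<lambda>q. pd d (\<lambda>q. g q $ a $ b) q + pd b (\<lambda>q. g q $ a $ d) q - pd a (\<lambda>q. g q $ d $ b) q)
        differentiable (at p)"
      by (intro differentiable_diff differentiable_metric_pd[OF p])
    then show ?thesis
      by (simp only: pd_cmult pd_diff[OF sum differentiable_metric_pd[OF p]]
          pd_add[OF differentiable_metric_pd[OF p] differentiable_metric_pd[OF p]] metric_pd2_def)
  qed
  finally show ?thesis .
qed

lemma riemann_eq_metric_pd2:
  assumes p: "p \<in> U"
  shows "riemann g p a b c d =
    (1/2) * (metric_pd2 p c d a b + metric_pd2 p c b a d - metric_pd2 p c a d b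
             - metric_pd2 p d c a b - metric_pd2 p d b a c + metric_pd2 p d a c b)
    - christoffel_square p c a d b + christoffel_square p d a c b"
proof -
  let ?C = "christoffel g p"
  have quadratic: "(\<Sum>e\<in>UNIV. g p $ a $ e * (\<Sum>f\<in>UNIV. ?C e c f * ?C f d b - ?C e d f * ?C f c b))
     = (\<Sum>f\<in>UNIV. christoffel_lower p a c f * ?C f d b) - (\<Sum>f\<in>UNIV. christoffel_lower p a d f * ?C f c b)"
    by (simp add: christoffel_lower_def sum_subtractf right_diff_distrib
        sum_swap_mult[where X="\<lambda>f. ?C f d b"] sum_swap_mult[where X="\<lambda>f. ?C f c b"])
  have "riemann g p a b c d
      = (\<Sum>e\<in>UNIV. g p $ a $ e * christoffel_pd p c e d b) - (\<Sum>e\<in>UNIV. g p $ a $ e * christoffel_pd p d e c b)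
        + ((\<Sum>f\<in>UNIV. christoffel_lower p a c f * ?C f d b) - (\<Sum>f\<in>UNIV. christoffel_lower p a d f * ?C f c b))"
    unfolding riemann_def riemann_up_def christoffel_pd_def[symmetric] quadratic[symmetric]
    by (simp add: sum_subtractf sum.distrib algebra_simps)
  moreover have "(\<Sum>e\<in>UNIV. metric_pd p x a e * ?C e y b)
      = (\<Sum>e\<in>UNIV. christoffel_lower p a x e * ?C e y b) + christoffel_square p x a y b" for x y
    by (simp add: metric_pd_eq_christoffel_lower[OF p] christoffel_square_def distrib_right sum.distrib)
  ultimately show ?thesis
    using pd_christoffel_lower[OF p, of c a d b] pd_christoffel_lower[OF p, of d a c b]
    by (simp add: sum.distrib algebra_simps)
qed

lemma christoffel_square_swap: "p \<in> U \<Longrightarrow> christoffel_square p c a d b = christoffel_square p d b c a"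
proof -
  assume p: "p \<in> U"
  have "christoffel_square p c a d b = (\<Sum>e\<in>UNIV. \<Sum>f\<in>UNIV.
      christoffel_lower p e c a * matrix_inv (g p) $ e $ f * christoffel_lower p f d b)"
    by (simp add: christoffel_square_def christoffel_eq_raise[OF p] sum_distrib_left mult_ac)
  also have "\<dots> = (\<Sum>f\<in>UNIV. \<Sum>e\<in>UNIV.
      christoffel_lower p e c a * matrix_inv (g p) $ e $ f * christoffel_lower p f d b)"
    by (rule sum.swap)
  also have "\<dots> = christoffel_square p d b c a"
    by (simp add: christoffel_square_def christoffel_eq_raise[OF p] sum_distrib_left mult_ac
        inverse_metric_symmetric[OF p, of _ "_"])
  finally show ?thesis .
qed

lemma riemann_antisym_left: "p \<in> U \<Longrightarrow> riemann g p a b c d = - riemann g p b a c d"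
  using riemann_eq_metric_pd2[of p a b c d] riemann_eq_metric_pd2[of p b a c d]
    metric_pd2_symmetric[of p c d b a] metric_pd2_symmetric[of p c a b d] metric_pd2_symmetric[of p c b d a]
    metric_pd2_symmetric[of p d c b a] metric_pd2_symmetric[of p d a b c] metric_pd2_symmetric[of p d b c a]
    metric_pd2_commute[of p c d a b] christoffel_square_swap[of p d b c a] christoffel_square_swap[of p c b d a]
  by (simp add: field_simps)

lemma riemann_up_bianchi:
  assumes p: "p \<in> U"
  shows "riemann_up g p a b c d + riemann_up g p a c d b + riemann_up g p a d b c = 0"
proof -
  let ?C = "christoffel g p"
  have "?C e d b = ?C e b d" "?C e c b = ?C e b c" "?C e d c = ?C e c d" for e
    using christoffel_symmetric[OF p] by blast+
  then have quadratic: "(\<Sum>e\<in>UNIV. ?C a c e * ?C e d b - ?C a d e * ?C e c b)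
     + (\<Sum>e\<in>UNIV. ?C a d e * ?C e b c - ?C a b e * ?C e d c)
     + (\<Sum>e\<in>UNIV. ?C a b e * ?C e c d - ?C a c e * ?C e b d) = 0"
    by (simp add: sum.distrib[symmetric] sum_subtractf[symmetric])
  have pd_symmetric: "christoffel_pd p x a y z = christoffel_pd p x a z y" for x y z
    unfolding christoffel_pd_def by (rule pd_cong_open[OF open_U p]) (auto intro: christoffel_symmetric)
  show ?thesis
    using quadratic pd_symmetric[of c d b] pd_symmetric[of d c b] pd_symmetric[of b d c]
    unfolding riemann_up_def christoffel_pd_def[symmetric] by linarith
qed

lemma riemann_bianchi: "p \<in> U \<Longrightarrow> riemann g p a b c d + riemann g p a c d b + riemann g p a d b c = 0"
  unfolding riemann_def sum.distrib[symmetric] distrib_left[symmetric] by (simp add: riemann_up_bianchi)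

lemma riemann_pair_symmetric: "p \<in> U \<Longrightarrow> riemann g p a b c d = riemann g p c d a b"
  by (rule pair_symmetric_if_bianchi[of "riemann g p"])
     (auto intro: riemann_antisym_left riemann_antisym_right riemann_bianchi)

lemma riemann_up_eq_raise:
  assumes p: "p \<in> U"
  shows "riemann_up g p a b c d = (\<Sum>e\<in>UNIV. matrix_inv (g p) $ a $ e * riemann g p e b c d)"
proof -
  have "(\<Sum>e\<in>UNIV. matrix_inv (g p) $ a $ e * riemann g p e b c d)
     = (\<Sum>f\<in>UNIV. (\<Sum>e\<in>UNIV. matrix_inv (g p) $ a $ e * g p $ e $ f) * riemann_up g p f b c d)"
    unfolding riemann_def by (rule sum_swap_mult)
  also have "\<dots> = riemann_up g p a b c d"
    by (simp add: inverse_metric_metric[OF p] sum_kronecker_mult)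
  finally show ?thesis by simp
qed

lemma ricci_symmetric: "p \<in> U \<Longrightarrow> ricci g p b d = ricci g p d b"
proof -
  assume p: "p \<in> U"
  let ?Gi = "matrix_inv (g p)"
  have "ricci g p b d = (\<Sum>a\<in>UNIV. \<Sum>e\<in>UNIV. ?Gi $ a $ e * riemann g p a d e b)"
    unfolding ricci_def by (simp add: riemann_up_eq_raise[OF p] riemann_pair_symmetric[OF p, of _ b _ d])
  also have "\<dots> = (\<Sum>e\<in>UNIV. \<Sum>a\<in>UNIV. ?Gi $ a $ e * riemann g p a d e b)" by (rule sum.swap)
  also have "\<dots> = ricci g p d b"
    unfolding ricci_def by (simp add: riemann_up_eq_raise[OF p] inverse_metric_symmetric[OF p, of _ "_"])
  finally show ?thesis .
qed

lemma weyl_comp_antisym_left: "p \<in> U \<Longrightarrow> weyl_comp g p a b c d = - weyl_comp g p b a c d"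
  by (simp add: weyl_comp_def Let_def riemann_antisym_left[of p a b c d] algebra_simps)

lemma weyl_comp_bianchi:
  assumes p: "p \<in> U"
  shows "weyl_comp g p a b c d + weyl_comp g p a c d b + weyl_comp g p a d b c = 0"
proof -
  have "riemann g p a b c d = - riemann g p a c d b - riemann g p a d b c"
    using riemann_bianchi[OF p, of a b c d] by linarith
  moreover have "g p $ x $ y = g p $ y $ x" "ricci g p x y = ricci g p y x" for x y
    using symmetric[OF p] ricci_symmetric[OF p] by blast+
  ultimately show ?thesis
    by (simp add: weyl_comp_def Let_def algebra_simps)
qed

lemma weyl_comp_pair_symmetric: "p \<in> U \<Longrightarrow> weyl_comp g p a b c d = weyl_comp g p c d a b"
  by (rule pair_symmetric_if_bianchi[of "weyl_comp g p"])
     (auto intro: weyl_comp_antisym_left weyl_comp_antisym_right weyl_comp_bianchi)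

lemma inverse_metric_contract:
  assumes p: "p \<in> U"
  shows "(\<Sum>a\<in>UNIV. \<Sum>c\<in>UNIV. matrix_inv (g p) $ a $ c * (g p $ a $ d * X c)) = (X d :: real)"
proof -
  have "(\<Sum>a\<in>UNIV. \<Sum>c\<in>UNIV. matrix_inv (g p) $ a $ c * (g p $ a $ d * X c))
      = (\<Sum>c\<in>UNIV. (\<Sum>a\<in>UNIV. matrix_inv (g p) $ c $ a * g p $ a $ d) * X c)"
    by (subst sum.swap)
       (simp add: sum_distrib_right sum_distrib_left inverse_metric_symmetric[OF p, of _ "_"] mult_ac)
  also have "\<dots> = X d"
    by (simp add: inverse_metric_metric[OF p] sum_kronecker_mult eq_commute[of c d for c])
  finally show ?thesis .
qed

lemma trace_riemann: "p \<in> U \<Longrightarrow>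
    (\<Sum>a\<in>UNIV. \<Sum>c\<in>UNIV. matrix_inv (g p) $ a $ c * riemann g p a b c d) = ricci g p b d"
  unfolding ricci_def riemann_up_eq_raise
  by (subst sum.swap) (simp add: inverse_metric_symmetric[of p _ "_"])

lemma trace_metric: "p \<in> U \<Longrightarrow>
    (\<Sum>a\<in>UNIV. \<Sum>c\<in>UNIV. matrix_inv (g p) $ a $ c * g p $ a $ c) = real CARD('d)"
  using inverse_metric_metric[of p] by (simp add: symmetric[of p _ "_"])

lemma inverse_metric_contract_left:
  assumes p: "p \<in> U"
  shows "(\<Sum>a\<in>UNIV. \<Sum>c\<in>UNIV. matrix_inv (g p) $ a $ c * (g p $ b $ c * X a)) = (X b :: real)"
proof -
  have "(\<Sum>a\<in>UNIV. \<Sum>c\<in>UNIV. matrix_inv (g p) $ a $ c * (g p $ b $ c * X a))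
      = (\<Sum>c\<in>UNIV. \<Sum>a\<in>UNIV. matrix_inv (g p) $ c $ a * (g p $ c $ b * X a))"
    by (subst sum.swap) (simp add: inverse_metric_symmetric[OF p, of _ "_"] symmetric[OF p, of b])
  then show ?thesis
    using inverse_metric_contract[OF p, of b X] by (simp add: mult_ac)
qed

lemma weyl_comp_trace:
  assumes p: "p \<in> U" and dim: "CARD('d) \<ge> 3"
  shows "(\<Sum>a\<in>UNIV. \<Sum>c\<in>UNIV. matrix_inv (g p) $ a $ c * weyl_comp g p a b c d) = 0"
proof -
  let ?Gi = "matrix_inv (g p)" and ?G = "g p" and ?R = "ricci g p" and ?S = "scalar_curv g p"
  define N where "N = real CARD('d)"
  have N: "N - 2 \<noteq> 0" "N - 1 \<noteq> 0" using dim by (auto simp: N_def)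
  have scalar: "(\<Sum>a\<in>UNIV. \<Sum>c\<in>UNIV. ?Gi $ a $ c * (?G $ b $ d * ?R a c)) = ?G $ b $ d * ?S"
    by (simp add: scalar_curv_def sum_distrib_left mult_ac)
  define k where "k = 1 / (N - 2)"
  define s where "s = ?S / ((N - 1) * (N - 2))"
  have expand: "weyl_comp g p a b c d = riemann g p a b c d
      - k * (?G $ a $ c * ?R b d - ?G $ a $ d * ?R b c - ?G $ b $ c * ?R a d + ?G $ b $ d * ?R a c)
      + s * (?G $ a $ c * ?G $ b $ d - ?G $ a $ d * ?G $ b $ c)" for a c
    by (simp add: weyl_comp_def Let_def k_def s_def N_def)
  have "(\<Sum>a\<in>UNIV. \<Sum>c\<in>UNIV. ?Gi $ a $ c * weyl_comp g p a b c d)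
     = (\<Sum>a\<in>UNIV. \<Sum>c\<in>UNIV. ?Gi $ a $ c * riemann g p a b c d)
       - k * ((\<Sum>a\<in>UNIV. \<Sum>c\<in>UNIV. ?Gi $ a $ c * ?G $ a $ c) * ?R b d
              - (\<Sum>a\<in>UNIV. \<Sum>c\<in>UNIV. ?Gi $ a $ c * (?G $ a $ d * ?R b c))
              - (\<Sum>a\<in>UNIV. \<Sum>c\<in>UNIV. ?Gi $ a $ c * (?G $ b $ c * ?R a d))
              + (\<Sum>a\<in>UNIV. \<Sum>c\<in>UNIV. ?Gi $ a $ c * (?G $ b $ d * ?R a c)))
       + s * ((\<Sum>a\<in>UNIV. \<Sum>c\<in>UNIV. ?Gi $ a $ c * ?G $ a $ c) * ?G $ b $ d
              - (\<Sum>a\<in>UNIV. \<Sum>c\<in>UNIV. ?Gi $ a $ c * (?G $ a $ d * ?G $ b $ c)))"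
    unfolding expand by (simp add: algebra_simps sum.distrib sum_subtractf sum_distrib_left sum_distrib_right)
  also have "\<dots> = ?R b d - k * (N * ?R b d - ?R b d - ?R b d + ?G $ b $ d * ?S)
       + s * (N * ?G $ b $ d - ?G $ b $ d)"
    by (simp only: trace_riemann[OF p] trace_metric[OF p, folded N_def] inverse_metric_contract[OF p]
        inverse_metric_contract_left[OF p] scalar)
  also have "\<dots> = 0"
  proof -
    have "s * (N * ?G $ b $ d - ?G $ b $ d) = (?S * ?G $ b $ d) * ((N - 1) / ((N - 1) * (N - 2)))"
      by (simp add: s_def algebra_simps)
    also have "\<dots> = k * (?G $ b $ d * ?S)"
      using N by (simp add: k_def mult_ac)
    finally show ?thesis
      using N by (simp add: k_def field_simps)
  qed
  finally show ?thesis .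
qed

lemma weyl_antisym_left:
  assumes p: "p \<in> U"
  shows "weyl g p u v w x = - weyl g p v u w x"
proof -
  have "weyl g p u v w x = (\<Sum>b\<in>UNIV. \<Sum>a\<in>UNIV. \<Sum>c\<in>UNIV. \<Sum>d\<in>UNIV.
      weyl_comp g p a b c d * u $ a * v $ b * w $ c * x $ d)"
    unfolding weyl_def by (rule sum.swap)
  also have "\<dots> = (\<Sum>b\<in>UNIV. \<Sum>a\<in>UNIV. \<Sum>c\<in>UNIV. \<Sum>d\<in>UNIV.
      - (weyl_comp g p b a c d * v $ b * u $ a * w $ c * x $ d))"
    apply (intro sum.cong refl)
    subgoal for b a c d using weyl_comp_antisym_left[OF p, of a b c d] by simp
    done
  finally show ?thesis by (simp add: weyl_def sum_negf)
qed

lemma weyl_pair_symmetric: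
  assumes p: "p \<in> U"
  shows "weyl g p u v w x = weyl g p w x u v"
proof -
  have "weyl g p u v w x = (\<Sum>c\<in>UNIV. \<Sum>d\<in>UNIV. \<Sum>a\<in>UNIV. \<Sum>b\<in>UNIV.
      weyl_comp g p a b c d * u $ a * v $ b * w $ c * x $ d)"
    unfolding weyl_def by (rule sum_swap_pairs)
  also have "\<dots> = (\<Sum>c\<in>UNIV. \<Sum>d\<in>UNIV. \<Sum>a\<in>UNIV. \<Sum>b\<in>UNIV.
      weyl_comp g p c d a b * w $ c * x $ d * u $ a * v $ b)"
    apply (intro sum.cong refl)
    subgoal for c d a b using weyl_comp_pair_symmetric[OF p, of a b c d] by simp
    done
  finally show ?thesis by (simp add: weyl_def)
qed

lemma weyl_bianchi:
  assumes p: "p \<in> U"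
  shows "weyl g p u v w x + weyl g p u w x v + weyl g p u x v w = 0"
proof -
  have "weyl g p u w x v = (\<Sum>a\<in>UNIV. \<Sum>b\<in>UNIV. \<Sum>c\<in>UNIV. \<Sum>d\<in>UNIV.
      weyl_comp g p a c d b * u $ a * w $ c * x $ d * v $ b)"
    unfolding weyl_def by (rule sum.cong[OF refl], rule sum_rotate3[symmetric])
  moreover have "weyl g p u x v w = (\<Sum>a\<in>UNIV. \<Sum>b\<in>UNIV. \<Sum>c\<in>UNIV. \<Sum>d\<in>UNIV.
      weyl_comp g p a d b c * u $ a * x $ d * v $ b * w $ c)"
    unfolding weyl_def by (rule sum.cong[OF refl], rule sum_rotate3)
  ultimately have "weyl g p u v w x + weyl g p u w x v + weyl g p u x v w
     = (\<Sum>a\<in>UNIV. \<Sum>b\<in>UNIV. \<Sum>c\<in>UNIV. \<Sum>d\<in>UNIV.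
         (weyl_comp g p a b c d + weyl_comp g p a c d b + weyl_comp g p a d b c)
         * u $ a * v $ b * w $ c * x $ d)"
    unfolding weyl_def by (simp add: sum.distrib algebra_simps)
  also have "\<dots> = 0" by (simp add: weyl_comp_bianchi[OF p])
  finally show ?thesis .
qed

end

section \<open>Infinitesimal changes of a null frame\<close>

locale spacetime_null_frame =
  fixes U :: "(real^'d::finite) set" and g :: "real^'d \<Rightarrow> real^'d^'d"
    and l nn :: "real^'d \<Rightarrow> real^'d" and m :: "nat \<Rightarrow> real^'d \<Rightarrow> real^'d"
  assumes dim: "CARD('d) \<ge> 3"
    and open_U: "open U"
    and smooth: "\<And>a b. C_inf_on U (\<lambda>p. g p $ a $ b)"
    and symmetric: "\<And>p a b. p \<in> U \<Longrightarrow> g p $ a $ b = g p $ b $ a"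
    and null_frame: "null_frame g U l nn m"
begin

lemma null_basis: "p \<in> U \<Longrightarrow> null_basis (g p) (l p) (nn p) (\<lambda>i. m i p)"
  using symmetric null_frame dim unfolding null_frame_def null_basis_def gdot_eq_metric_form by auto

sublocale smooth_metric U g
  using open_U smooth symmetric null_basis.invertible[OF null_basis] by unfold_locales

lemma inverse_metric_eq_frame:
  "p \<in> U \<Longrightarrow> matrix_inv (g p) $ a $ c =
     l p $ a * nn p $ c + nn p $ a * l p $ c + (\<Sum>k\<in>{2..<CARD('d)}. m k p $ a * m k p $ c)"
  by (simp add: null_basis.matrix_inv_eq_frame_inverse[OF null_basis] frame_inverse_def)

lemma weyl_frame_trace:
  assumes p: "p \<in> U"
  shows "weyl g p (l p) v (nn p) x + weyl g p (nn p) v (l p) x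
     + (\<Sum>k\<in>{2..<CARD('d)}. weyl g p (m k p) v (m k p) x) = 0"
proof -
  let ?Gi = "matrix_inv (g p)"
  let ?F = "\<lambda>a b c d. weyl_comp g p a b c d * ?Gi $ a $ c * v $ b * x $ d"
  have "weyl g p (l p) v (nn p) x + weyl g p (nn p) v (l p) x
     + (\<Sum>k\<in>{2..<CARD('d)}. weyl g p (m k p) v (m k p) x)
     = (\<Sum>a\<in>UNIV. \<Sum>b\<in>UNIV. \<Sum>c\<in>UNIV. \<Sum>d\<in>UNIV. ?F a b c d)"
    unfolding weyl_def inverse_metric_eq_frame[OF p]
    by (simp add: algebra_simps sum.distrib sum_distrib_left sum_distrib_right
        sum.swap[of _ "{2..<CARD('d)}"])
  also have "\<dots> = (\<Sum>a\<in>UNIV. \<Sum>c\<in>UNIV. \<Sum>d\<in>UNIV. \<Sum>b\<in>UNIV. ?F a b c d)"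
    by (rule sum.cong[OF refl], rule sum_rotate3)
  also have "\<dots> = (\<Sum>d\<in>UNIV. \<Sum>b\<in>UNIV. \<Sum>a\<in>UNIV. \<Sum>c\<in>UNIV. ?F a b c d)"
    by (rule sum_swap_pairs)
  also have "\<dots> = (\<Sum>b\<in>UNIV. \<Sum>d\<in>UNIV. v $ b * x $ d *
      (\<Sum>a\<in>UNIV. \<Sum>c\<in>UNIV. ?Gi $ a $ c * weyl_comp g p a b c d))"
    by (subst sum.swap) (simp add: sum_distrib_left mult_ac)
  also have "\<dots> = 0" by (simp add: weyl_comp_trace[OF p dim])
  finally show ?thesis .
qed

lemma boost_change_eq: "p \<in> U \<Longrightarrow> boost_change g l m eps p i j = 2 * eps * Omega0 g l m p i j"
proof -
  assume p: "p \<in> U"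
  have "boost_change g l m eps p i j =
      weyl g p (eps *\<^sub>R l p) (m i p) (l p) (m j p) + weyl g p (l p) 0 (l p) (m j p)
      + weyl g p (l p) (m i p) (eps *\<^sub>R l p) (m j p) + weyl g p (l p) (m i p) (l p) 0"
    unfolding boost_change_def
    by (intro DERIV_imp_deriv has_real_derivative_weyl) (auto intro!: derivative_eq_intros)
  then show ?thesis by (simp add: weyl_scaleR weyl_zero Omega0_def)
qed

lemma nullrot_l_change_eq: "p \<in> U \<Longrightarrow> nullrot_l_change g l m z p i j = 0"
proof -
  assume p: "p \<in> U"
  have "nullrot_l_change g l m z p i j =
      weyl g p 0 (m i p) (l p) (m j p) + weyl g p (l p) ((- z i) *\<^sub>R l p) (l p) (m j p)
      + weyl g p (l p) (m i p) 0 (m j p) + weyl g p (l p) (m i p) (l p) ((- z j) *\<^sub>R l p)"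
    unfolding nullrot_l_change_def
    by (intro DERIV_imp_deriv has_real_derivative_weyl) (auto intro!: derivative_eq_intros)
  moreover have "weyl g p (l p) (l p) (l p) (m j p) = 0"
    using weyl_antisym_left[OF p, of "l p" "l p"] by simp
  moreover have "weyl g p (l p) (m i p) (l p) (l p) = 0"
    using weyl_antisym_right[of g p "l p" "m i p" "l p" "l p"] by simp
  ultimately show ?thesis by (simp add: weyl_minus weyl_scaleR weyl_zero)
qed

lemma spin_change_eq:
  "p \<in> U \<Longrightarrow> spin_change g l m A p i j =
    (\<Sum>k\<in>{2..<CARD('d)}. A i k * Omega0 g l m p k j) + (\<Sum>k\<in>{2..<CARD('d)}. A j k * Omega0 g l m p i k)"
proof -
  assume p: "p \<in> U"
  have "spin_change g l m A p i j =
      weyl g p 0 (m i p) (l p) (m j p) + weyl g p (l p) (\<Sum>k\<in>{2..<CARD('d)}. A i k *\<^sub>R m k p) (l p) (m j p)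
      + weyl g p (l p) (m i p) 0 (m j p) + weyl g p (l p) (m i p) (l p) (\<Sum>k\<in>{2..<CARD('d)}. A j k *\<^sub>R m k p)"
    unfolding spin_change_def
    by (intro DERIV_imp_deriv has_real_derivative_weyl) (auto intro!: derivative_eq_intros)
  then show ?thesis by (simp add: weyl_sum weyl_scaleR weyl_zero Omega0_def)
qed

lemma nullrot_n_change_eq:
  "p \<in> U \<Longrightarrow> nullrot_n_change g l nn m z p i j =
    weyl g p (\<Sum>k\<in>{2..<CARD('d)}. z k *\<^sub>R m k p) (m i p) (l p) (m j p)
  + weyl g p (l p) (m i p) (\<Sum>k\<in>{2..<CARD('d)}. z k *\<^sub>R m k p) (m j p)
  - z i * weyl g p (l p) (nn p) (l p) (m j p) - z j * weyl g p (l p) (m i p) (l p) (nn p)"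
proof -
  assume p: "p \<in> U"
  define s where "s = (\<Sum>k\<in>{2..<CARD('d)}. z k *\<^sub>R m k p)"
  have "nullrot_n_change g l nn m z p i j =
      weyl g p s (m i p) (l p) (m j p) + weyl g p (l p) ((- z i) *\<^sub>R nn p) (l p) (m j p)
      + weyl g p (l p) (m i p) s (m j p) + weyl g p (l p) (m i p) (l p) ((- z j) *\<^sub>R nn p)"
    unfolding nullrot_n_change_def Let_def s_def[symmetric]
    by (intro DERIV_imp_deriv has_real_derivative_weyl) (auto intro!: derivative_eq_intros)
  then show ?thesis by (simp add: s_def weyl_minus weyl_scaleR)
qed

lemma coord_change_eq:
  assumes "p \<in> U" "\<And>q. q \<in> U \<Longrightarrow> Omega0 g l m q i j = 0"
  shows "coord_change g l m xi p i j = 0"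
proof -
  have "pd mu (\<lambda>q. Omega0 g l m q i j) p = pd mu (\<lambda>q. 0) p" for mu
    by (rule pd_cong_open[OF open_U]) (use assms in auto)
  then show ?thesis by (simp add: coord_change_def)
qed

lemma weyl_l_n_l_m_eq_0:
  assumes p: "p \<in> U" and j: "j \<in> {2..<CARD('d)}"
    and Psi0: "\<And>i j k. i \<in> {2..<CARD('d)} \<Longrightarrow> j \<in> {2..<CARD('d)} \<Longrightarrow> k \<in> {2..<CARD('d)} \<Longrightarrow>
      Psi0 g l m p i j k = 0"
  shows "weyl g p (l p) (nn p) (l p) (m j p) = 0"
proof -
  have "weyl g p (l p) (l p) (nn p) (m j p) = 0"
    using weyl_antisym_left[OF p, of "l p" "l p"] by simp
  moreover have "weyl g p (m k p) (l p) (m k p) (m j p) = 0" if "k \<in> {2..<CARD('d)}" for k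
    using weyl_antisym_left[OF p, of "m k p" "l p"] Psi0[OF that that j] by (simp add: Psi0_def)
  ultimately show ?thesis
    using weyl_frame_trace[OF p, of "l p" "m j p"] weyl_antisym_left[OF p, of "nn p" "l p"] by simp
qed

lemma multiple_WAND_if_gauge_invariant:
  assumes p: "p \<in> U" and gauge: "Omega1_gauge_invariant g U l nn m"
  shows "multiple_WAND g l m p"
proof -
  let ?I = "{2..<CARD('d)}"
  have Omega0: "Omega0 g l m p i j = 0" if "i \<in> ?I" "j \<in> ?I" for i j
    using gauge p that boost_change_eq[OF p, of 1 i j] unfolding Omega1_gauge_invariant_def by auto
  define P where "P i j k = weyl g p (l p) (m i p) (m j p) (m k p)" for i j k
  define \<Phi> where "\<Phi> j = weyl g p (l p) (nn p) (l p) (m j p)" for j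
  have nullrot: "P j k i + P i k j - (if i = k then \<Phi> j else 0) - (if j = k then \<Phi> i else 0) = 0"
    if i: "i \<in> ?I" and j: "j \<in> ?I" and k: "k \<in> ?I" for i j k
  proof -
    define z where "z q = (if q = k then 1 else 0 :: real)" for q
    have "(\<Sum>q\<in>?I. z q *\<^sub>R m q p) = (\<Sum>q\<in>?I. if q = k then m q p else 0)"
      by (rule sum.cong) (auto simp: z_def)
    then have "(\<Sum>q\<in>?I. z q *\<^sub>R m q p) = m k p" using k by simp
    moreover have "weyl g p (m k p) (m i p) (l p) (m j p) = P j k i"
      unfolding P_def by (rule weyl_pair_symmetric[OF p])
    moreover have "weyl g p (l p) (m i p) (l p) (nn p) = \<Phi> i"
      unfolding \<Phi>_def by (rule weyl_pair_symmetric[OF p])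
    ultimately have "nullrot_n_change g l nn m z p i j = P j k i + P i k j - z i * \<Phi> j - z j * \<Phi> i"
      by (simp add: nullrot_n_change_eq[OF p] P_def \<Phi>_def)
    moreover have "nullrot_n_change g l nn m z p i j = 0"
      using gauge p i j unfolding Omega1_gauge_invariant_def by blast
    ultimately show ?thesis by (simp add: z_def split: if_splits)
  qed
  have antisym: "P i j k = - P i k j" for i j k unfolding P_def by (rule weyl_antisym_right)
  have \<Phi>: "\<Phi> i = 0" if "i \<in> ?I" for i
    using nullrot[OF that that that] antisym[of i i i] by simp
  have "P j k i + P i k j = 0" if "i \<in> ?I" "j \<in> ?I" "k \<in> ?I" for i j k
    using nullrot[OF that] \<Phi>[of i] \<Phi>[of j] that by (simp split: if_splits)
  then have "P i j k = 0" if "i \<in> ?I" "j \<in> ?I" "k \<in> ?I" for i j k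
    using vanishes_if_antisym_cyclic[of P, OF antisym] weyl_bianchi[OF p] that unfolding P_def by blast
  then show ?thesis
    unfolding multiple_WAND_def using Omega0 by (auto simp: Psi0_def P_def)
qed

lemma gauge_invariant_if_multiple_WAND:
  assumes WAND: "\<forall>p\<in>U. multiple_WAND g l m p"
  shows "Omega1_gauge_invariant g U l nn m"
  unfolding Omega1_gauge_invariant_def
proof (intro ballI conjI allI impI)
  let ?I = "{2..<CARD('d)}"
  fix p i j assume p: "p \<in> U" and i: "i \<in> ?I" and j: "j \<in> ?I"
  have Omega0: "\<And>q a b. q \<in> U \<Longrightarrow> a \<in> ?I \<Longrightarrow> b \<in> ?I \<Longrightarrow> Omega0 g l m q a b = 0"
    using WAND unfolding multiple_WAND_def by blast
  have Psi0: "\<And>a b c. a \<in> ?I \<Longrightarrow> b \<in> ?I \<Longrightarrow> c \<in> ?I \<Longrightarrow> Psi0 g l m p a b c = 0"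
    using WAND p unfolding multiple_WAND_def by blast
  show "coord_change g l m xi p i j = 0" for xi
    by (rule coord_change_eq[OF p Omega0[OF _ i j]])
  show "boost_change g l m eps p i j = 0" for eps
    by (simp add: boost_change_eq[OF p] Omega0[OF p i j])
  show "spin_change g l m A p i j = 0" for A
    using Omega0[OF p _ j] Omega0[OF p i] by (simp add: spin_change_eq[OF p])
  show "nullrot_l_change g l m z p i j = 0" for z
    by (rule nullrot_l_change_eq[OF p])
  show "nullrot_n_change g l nn m z p i j = 0" for z
  proof -
    have "weyl g p (l p) (nn p) (l p) (m a p) = 0" if "a \<in> ?I" for a
      using weyl_l_n_l_m_eq_0[OF p that Psi0] .
    moreover have "weyl g p (m k p) (m i p) (l p) (m j p) = 0" if "k \<in> ?I" for k
      using weyl_pair_symmetric[OF p, of "m k p"] Psi0[OF j that i] by (simp add: Psi0_def)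
    moreover have "weyl g p (l p) (m i p) (l p) (nn p) = weyl g p (l p) (nn p) (l p) (m i p)"
      by (rule weyl_pair_symmetric[OF p])
    ultimately show ?thesis
      using Psi0 i j by (simp add: nullrot_n_change_eq[OF p] weyl_sum weyl_scaleR Psi0_def)
  qed
qed

end

theorem lemma1:
  fixes U :: "(real^'d::finite) set"
    and g :: "real^'d \<Rightarrow> real^'d^'d"
    and l nn :: "real^'d \<Rightarrow> real^'d"
    and m :: "nat \<Rightarrow> real^'d \<Rightarrow> real^'d"
  assumes "CARD('d) \<ge> 4"
    and "open U"
    and "\<forall>a b. C_inf_on U (\<lambda>p. g p $ a $ b)"
    and "\<forall>p\<in>U. \<forall>a b. g p $ a $ b = g p $ b $ a"
    and "null_frame g U l nn m"
    and "\<forall>a. C_inf_on U (\<lambda>p. l p $ a) \<and> C_inf_on U (\<lambda>p. nn p $ a) \<and>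
             (\<forall>i\<in>{2..<CARD('d)}. C_inf_on U (\<lambda>p. m i p $ a))"
  shows "(Omega1_gauge_invariant g U l nn m \<longleftrightarrow> (\<forall>p\<in>U. multiple_WAND g l m p)) \<and>
         (Omega1_gauge_invariant g U l nn m \<longleftrightarrow>
            (\<forall>p\<in>U. (\<forall>i\<in>{2..<CARD('d)}. \<forall>j\<in>{2..<CARD('d)}. \<forall>k\<in>{2..<CARD('d)}. Psi0 g l m p i j k = 0) \<and>
                    (\<forall>i\<in>{2..<CARD('d)}. \<forall>j\<in>{2..<CARD('d)}. Omega0 g l m p i j = 0)))"
proof -
  interpret spacetime_null_frame U g l nn m
    using assms(1-5) by unfold_locales auto
  have "Omega1_gauge_invariant g U l nn m \<longleftrightarrow> (\<forall>p\<in>U. multiple_WAND g l m p)"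
    using multiple_WAND_if_gauge_invariant gauge_invariant_if_multiple_WAND by blast
  then show ?thesis unfolding multiple_WAND_def by blast
qed

end
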